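(* Assume that for every predictable stopping time $\sigma$, $\mathbb P(\{\sigma<\infty\}\cap\{X_{\sigma-}<b(\sigma)\le X_\sigma\})=0$. Then $\tau_G$ is a totally inaccessible stopping time, i.e. $\tau_G$ is a stopping time and $\mathbb P(\tau_G=\sigma<\infty)=0$ for every predictable stopping time $\sigma$. In particular this holds whenever $X$ has no jumps at predictable times, i.e. $\mathbb P(\Delta X_\sigma\neq0,\ \sigma<\infty)=0$ for every predictable stopping time $\sigma$.
   Context: Let $(\Omega,\mathcal F,\mathbb F=(\mathcal F_t)_{t\ge0},\mathbb P)$ be a filtered probability space satisfying the usual conditions. Let $X$ be a càdlàg $\mathbb F$-adapted real-valued process and $b:[0,\infty)\to\mathbb R$ a continuous deterministic function, with $X_0<b(0)$ identically. For $t>0$, $X_{t-}:=\lim_{s\uparrow t}X_s$ and $\Delta X_t:=X_t-X_{t-}$. Set $Y_t:=X_t-b(t)$, $\tau:=\inf\{t\ge0: Y_t\ge 0\}$ (with $\inf\emptyset=\infty$), $G:=\{\tau<\infty,\,Y_{\tau-}<0\}$, and define $\tau_G:=\tau$ on $G$ and $\tau_G:=\infty$ on $\Omega\setminus G$. *)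

theory Defs
  imports "HOL-Probability.Probability"
begin

definition filtration_on :: "'a measure \<Rightarrow> (real \<Rightarrow> 'a set set) \<Rightarrow> bool" where
  "filtration_on M F \<longleftrightarrow>
     (\<forall>t\<ge>0. sigma_algebra (space M) (F t) \<and> F t \<subseteq> sets M) \<and>
     (\<forall>s t. 0 \<le> s \<longrightarrow> s \<le> t \<longrightarrow> F s \<subseteq> F t)"

definition usual_conditions :: "'a measure \<Rightarrow> (real \<Rightarrow> 'a set set) \<Rightarrow> bool" where
  "usual_conditions M F \<longleftrightarrow>
     filtration_on M F \<and>
     (\<forall>t\<ge>0. F t = (\<Inter>s\<in>{t<..}. F s)) \<and>
     (\<forall>N\<in>null_sets M. \<forall>A. A \<subseteq> N \<longrightarrow> A \<in> F 0)"

definition adapted :: "'a measure \<Rightarrow> (real \<Rightarrow> 'a set set) \<Rightarrow> (real \<Rightarrow> 'a \<Rightarrow> real) \<Rightarrow> bool" where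
  "adapted M F X \<longleftrightarrow>
     (\<forall>t\<ge>0. \<forall>B\<in>sets borel. {\<omega>\<in>space M. X t \<omega> \<in> B} \<in> F t)"

definition cadlag_paths :: "'a measure \<Rightarrow> (real \<Rightarrow> 'a \<Rightarrow> real) \<Rightarrow> bool" where
  "cadlag_paths M X \<longleftrightarrow>
     (\<forall>\<omega>\<in>space M. (\<forall>t\<ge>0. ((\<lambda>s. X s \<omega>) \<longlongrightarrow> X t \<omega>) (at_right t)) \<and>
                   (\<forall>t>0. \<exists>l. ((\<lambda>s. X s \<omega>) \<longlongrightarrow> l) (at_left t)))"

text \<open>Left limit X_{t-}; convention X_{0-} = X_0.\<close>
definition left_lim :: "(real \<Rightarrow> 'a \<Rightarrow> real) \<Rightarrow> real \<Rightarrow> 'a \<Rightarrow> real" where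
  "left_lim X t \<omega> = (if t \<le> 0 then X 0 \<omega> else Lim (at_left t) (\<lambda>s. X s \<omega>))"

definition stopping_time_on :: "'a measure \<Rightarrow> (real \<Rightarrow> 'a set set) \<Rightarrow> ('a \<Rightarrow> ennreal) \<Rightarrow> bool" where
  "stopping_time_on M F T \<longleftrightarrow> (\<forall>t\<ge>0. {\<omega>\<in>space M. T \<omega> \<le> ennreal t} \<in> F t)"

definition predictable_sets :: "'a measure \<Rightarrow> (real \<Rightarrow> 'a set set) \<Rightarrow> (real \<times> 'a) set set" where
  "predictable_sets M F = sigma_sets ({0..} \<times> space M)
     ({{0} \<times> A | A. A \<in> F 0} \<union> {{s<..t} \<times> A | s t A. 0 \<le> s \<and> s \<le> t \<and> A \<in> F s})"

definition predictable_time :: "'a measure \<Rightarrow> (real \<Rightarrow> 'a set set) \<Rightarrow> ('a \<Rightarrow> ennreal) \<Rightarrow> bool" where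
  "predictable_time M F \<sigma> \<longleftrightarrow> stopping_time_on M F \<sigma> \<and>
     {(t, \<omega>). 0 \<le> t \<and> \<omega> \<in> space M \<and> \<sigma> \<omega> \<le> ennreal t} \<in> predictable_sets M F"

definition totally_inaccessible :: "'a measure \<Rightarrow> (real \<Rightarrow> 'a set set) \<Rightarrow> ('a \<Rightarrow> ennreal) \<Rightarrow> bool" where
  "totally_inaccessible M F T \<longleftrightarrow> stopping_time_on M F T \<and>
     (\<forall>\<sigma>. predictable_time M F \<sigma> \<longrightarrow>
        {\<omega>\<in>space M. T \<omega> = \<sigma> \<omega> \<and> \<sigma> \<omega> < \<infinity>} \<in> null_sets M)"

text \<open>First hitting time of [0,\<infinity>) by Y (inf of the empty set is \<infinity>).\<close>
definition hitting_time :: "(real \<Rightarrow> 'a \<Rightarrow> real) \<Rightarrow> 'a \<Rightarrow> ennreal" where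
  "hitting_time Y \<omega> = Inf (ennreal ` {t. 0 \<le> t \<and> 0 \<le> Y t \<omega>})"

end

(* The hitting time tau is a stopping time even without the debut theorem.  Among the stopping
   times below tau choose rho maximising E[arctan rho], an essential supremum.  Where rho < tau we
   have Y_rho < 0, so by right continuity the first time after rho at which Y exceeds -1/(n+1) is,
   for large n, a strictly larger stopping time still below tau; by maximality this happens only
   on a null set, hence rho = tau a.s., and completeness of F_0 makes tau a stopping time.
   On {tau_G <= t} the path stays below some level -delta < 0 just before tau, a condition on
   countably many rational times, so tau_G is a stopping time as well.  Finally tau_G = sigma < oo
   forces X_{sigma-} < b(sigma) <= X_sigma, which is null for predictable sigma, and under the
   usual conditions every subset of a null set is an event. *)

theory Submission
  imports Defs
begin

lemma ennreal_le_iff_less_rationals_above: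
  fixes x :: ennreal
  assumes "0 \<le> t" "t < s"
  shows "x \<le> ennreal t \<longleftrightarrow> (\<forall>q\<in>\<rat>. t < q \<and> q < s \<longrightarrow> x < ennreal q)"
proof (intro iffI ballI impI)
  fix q
  assume "x \<le> ennreal t" "q \<in> \<rat>" "t < q \<and> q < s"
  moreover from this have "ennreal t < ennreal q"
    using assms by (simp add: ennreal_less_iff)
  ultimately show "x < ennreal q"
    by (simp add: le_less_trans)
next
  assume all: "\<forall>q\<in>\<rat>. t < q \<and> q < s \<longrightarrow> x < ennreal q"
  show "x \<le> ennreal t"
  proof (rule ccontr)
    assume "\<not> x \<le> ennreal t"
    then have "ennreal t < min x (ennreal s)"
      using assms by (simp add: ennreal_less_iff)
    then obtain r :: rat where r: "ennreal t < ennreal (of_rat r)" "ennreal (of_rat r) < min x (ennreal s)"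
      by (blast dest: ennreal_rat_dense)
    define q where "q = (of_rat r :: real)"
    have q: "q \<in> \<rat>" "ennreal t < ennreal q" "ennreal q < x" "ennreal q < ennreal s"
      using r by (simp_all only: q_def Rats_of_rat min_less_iff_conj)
    have "t < q"
      using q(2) assms by (simp add: ennreal_less_iff)
    moreover have "q < s"
      using q(4) ennreal_leI[of s q] by (auto simp: not_less[symmetric] dest: leD)
    ultimately have "x < ennreal q"
      using all q(1) by blast
    with q(3) show False
      using less_asym by blast
  qed
qed

section \<open>Stopping times under the usual conditions\<close>

locale filtered_prob_space = prob_space M for M :: "'a measure" +
  fixes F :: "real \<Rightarrow> 'a set set"
  assumes usual_conditions: "usual_conditions M F"
begin

lemma filtration: "filtration_on M F"
  using usual_conditions by (simp add: usual_conditions_def)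

lemma sigma_algebra_F: "0 \<le> t \<Longrightarrow> sigma_algebra (space M) (F t)"
  using filtration by (simp add: filtration_on_def)

lemma F_subset_sets: "0 \<le> t \<Longrightarrow> F t \<subseteq> sets M"
  using filtration by (simp add: filtration_on_def)

lemma F_mono: "0 \<le> s \<Longrightarrow> s \<le> t \<Longrightarrow> F s \<subseteq> F t"
  using filtration by (simp add: filtration_on_def)

lemma F_right_continuous: "0 \<le> t \<Longrightarrow> F t = (\<Inter>s\<in>{t<..}. F s)"
  using usual_conditions by (simp add: usual_conditions_def)

lemma null_subset_in_F:
  assumes "N \<in> null_sets M" "A \<subseteq> N" "0 \<le> t"
  shows "A \<in> F t"
proof -
  have "A \<in> F 0"
    using usual_conditions assms(1,2) by (auto simp: usual_conditions_def)
  then show ?thesis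
    using F_mono[OF order_refl assms(3)] by blast
qed

lemma null_sets_subset_complete:
  assumes "N \<in> null_sets M" "A \<subseteq> N"
  shows "A \<in> null_sets M"
  using null_sets_subset[OF assms(1) _ assms(2)] null_subset_in_F[OF assms order_refl]
    F_subset_sets[of 0] by blast

lemma space_in_F: "0 \<le> t \<Longrightarrow> space M \<in> F t"
  using sigma_algebra.sigma_sets_eq[OF sigma_algebra_F] sigma_sets_top by blast

lemma stopping_time_const_0: "stopping_time_on M F (\<lambda>_. 0)"
  using space_in_F by (simp add: stopping_time_on_def)

lemma stopping_time_le_in_F:
  assumes "stopping_time_on M F \<rho>" "0 \<le> s" "s \<le> t"
  shows "{\<omega>\<in>space M. \<rho> \<omega> \<le> ennreal s} \<in> F t"
  using assms F_mono[of s t] by (auto simp: stopping_time_on_def)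

lemma stopping_time_measurable:
  assumes "stopping_time_on M F \<rho>"
  shows "\<rho> \<in> borel_measurable M"
proof (rule borel_measurableI_le)
  fix y :: ennreal
  show "{\<omega>\<in>space M. \<rho> \<omega> \<le> y} \<in> sets M"
  proof (cases "y = \<top>")
    case False
    then obtain r where "y = ennreal r" "0 \<le> r"
      by (metis enn2real_nonneg ennreal_enn2real_if)
    then show ?thesis
      using assms F_subset_sets[of r] by (auto simp: stopping_time_on_def)
  qed simp
qed

lemma stopping_time_onI_less:
  assumes less: "\<And>u. 0 < u \<Longrightarrow> {\<omega>\<in>space M. \<rho> \<omega> < ennreal u} \<in> F u"
  shows "stopping_time_on M F \<rho>"
  unfolding stopping_time_on_def
proof (intro allI impI)
  fix t :: real
  assume t: "0 \<le> t"
  have "{\<omega>\<in>space M. \<rho> \<omega> \<le> ennreal t} \<in> F s" if "t < s" for s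
  proof -
    interpret sigma_algebra "space M" "F s"
      using sigma_algebra_F that t by simp
    let ?Q = "{q\<in>\<rat>. t < q \<and> q < s}"
    have "?Q \<noteq> {}"
      using Rats_dense_in_real[OF that] by blast
    then have "{\<omega>\<in>space M. \<rho> \<omega> \<le> ennreal t} = (\<Inter>q\<in>?Q. {\<omega>\<in>space M. \<rho> \<omega> < ennreal q})"
      using ennreal_le_iff_less_rationals_above[OF t that] by auto
    also have "\<dots> \<in> F s"
    proof (intro countable_INT' countable_Collect countable_rat image_subsetI \<open>?Q \<noteq> {}\<close>)
      fix q
      assume "q \<in> ?Q"
      then show "{\<omega>\<in>space M. \<rho> \<omega> < ennreal q} \<in> F s"
        using less[of q] F_mono[of q s] t by auto
    qed
    finally show ?thesis .
  qed
  then show "{\<omega>\<in>space M. \<rho> \<omega> \<le> ennreal t} \<in> F t"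
    using F_right_continuous[OF t] by blast
qed

lemma stopping_time_SUP:
  assumes "\<And>k::nat. stopping_time_on M F (\<rho> k)"
  shows "stopping_time_on M F (\<lambda>\<omega>. SUP k. \<rho> k \<omega>)"
  unfolding stopping_time_on_def
proof (intro allI impI)
  fix t :: real
  assume t: "0 \<le> t"
  interpret sigma_algebra "space M" "F t"
    using sigma_algebra_F[OF t] .
  have "{\<omega>\<in>space M. (SUP k. \<rho> k \<omega>) \<le> ennreal t} = (\<Inter>k. {\<omega>\<in>space M. \<rho> k \<omega> \<le> ennreal t})"
    by (auto simp: SUP_le_iff)
  also have "\<dots> \<in> F t"
    using assms t by (intro countable_INT) (auto simp: stopping_time_on_def)
  finally show "{\<omega>\<in>space M. (SUP k. \<rho> k \<omega>) \<le> ennreal t} \<in> F t" .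
qed

lemma stopping_time_eq_outside_null:
  assumes "stopping_time_on M F \<rho>" and "N \<in> null_sets M"
    and eq: "\<And>\<omega>. \<omega> \<in> space M - N \<Longrightarrow> \<tau> \<omega> = \<rho> \<omega>"
  shows "stopping_time_on M F \<tau>"
  unfolding stopping_time_on_def
proof (intro allI impI)
  fix t :: real
  assume t: "0 \<le> t"
  interpret sigma_algebra "space M" "F t"
    using sigma_algebra_F[OF t] .
  have "{\<omega>\<in>space M. \<tau> \<omega> \<le> ennreal t} =
      ({\<omega>\<in>space M. \<rho> \<omega> \<le> ennreal t} - N) \<union> ({\<omega>\<in>space M. \<tau> \<omega> \<le> ennreal t} \<inter> N)"
    using eq by auto
  also have "\<dots> \<in> F t"
    using assms(1) t null_subset_in_F[OF assms(2) _ t]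
    by (intro Un Diff) (auto simp: stopping_time_on_def)
  finally show "{\<omega>\<in>space M. \<tau> \<omega> \<le> ennreal t} \<in> F t" .
qed

end

section \<open>A maximal stopping time below a random time\<close>

definition arctan_ennreal :: "ennreal \<Rightarrow> ennreal" where
  "arctan_ennreal x = (if x = \<top> then 2 else ennreal (arctan (enn2real x)))"

lemma borel_measurable_arctan_ennreal [measurable]: "arctan_ennreal \<in> borel_measurable borel"
  unfolding arctan_ennreal_def by measurable

lemma arctan_ennreal_le_2: "arctan_ennreal x \<le> 2"
proof -
  have "arctan (enn2real x) \<le> 2"
    using arctan_ubound[of "enn2real x"] pi_less_4 by linarith
  then have "ennreal (arctan (enn2real x)) \<le> ennreal 2"
    by (rule ennreal_leI)
  then show ?thesis
    by (simp add: arctan_ennreal_def)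
qed

lemma strict_mono_arctan_ennreal: "strict_mono arctan_ennreal"
proof (rule strict_monoI)
  fix x y :: ennreal
  assume xy: "x < y"
  then obtain r where x: "x = ennreal r" "0 \<le> r"
    by (cases x) (auto simp: top_unique)
  show "arctan_ennreal x < arctan_ennreal y"
  proof (cases y)
    case (real s)
    with xy x have "r < s"
      by (simp add: ennreal_less_iff)
    with x real show ?thesis
      by (auto simp: arctan_ennreal_def ennreal_lessI arctan_less_iff)
  next
    case top
    have "arctan r < 2"
      using arctan_ubound[of r] pi_less_4 by linarith
    with x top show ?thesis
      by (simp add: arctan_ennreal_def ennreal_lessI)
  qed
qed

lemma nn_integral_arctan_ennreal_mono:
  assumes "\<And>\<omega>. \<omega> \<in> space M \<Longrightarrow> f \<omega> \<le> g \<omega>"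
  shows "(\<integral>\<^sup>+\<omega>. arctan_ennreal (f \<omega>) \<partial>M) \<le> (\<integral>\<^sup>+\<omega>. arctan_ennreal (g \<omega>) \<partial>M)"
  using assms by (intro nn_integral_mono) (simp add: strict_mono_less_eq[OF strict_mono_arctan_ennreal])

context filtered_prob_space
begin

lemma null_sets_less_if_nn_integral_arctan_le:
  assumes [measurable]: "f \<in> borel_measurable M" "g \<in> borel_measurable M"
    and le: "\<And>\<omega>. \<omega> \<in> space M \<Longrightarrow> f \<omega> \<le> g \<omega>"
    and integral_le: "(\<integral>\<^sup>+\<omega>. arctan_ennreal (g \<omega>) \<partial>M) \<le> (\<integral>\<^sup>+\<omega>. arctan_ennreal (f \<omega>) \<partial>M)"
  shows "{\<omega>\<in>space M. f \<omega> < g \<omega>} \<in> null_sets M"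
proof (rule ccontr)
  assume not_null: "{\<omega>\<in>space M. f \<omega> < g \<omega>} \<notin> null_sets M"
  have "(\<integral>\<^sup>+\<omega>. arctan_ennreal (f \<omega>) \<partial>M) < (\<integral>\<^sup>+\<omega>. arctan_ennreal (g \<omega>) \<partial>M)"
  proof (rule nn_integral_less)
    have "(\<integral>\<^sup>+\<omega>. arctan_ennreal (f \<omega>) \<partial>M) \<le> (\<integral>\<^sup>+\<omega>. 2 \<partial>M)"
      by (intro nn_integral_mono) (simp add: arctan_ennreal_le_2)
    then show "(\<integral>\<^sup>+\<omega>. arctan_ennreal (f \<omega>) \<partial>M) \<noteq> \<infinity>"
      by (auto simp: emeasure_space_1 top_unique)
    show "AE \<omega> in M. arctan_ennreal (f \<omega>) \<le> arctan_ennreal (g \<omega>)"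
      using le by (simp add: strict_mono_less_eq[OF strict_mono_arctan_ennreal])
    show "\<not> (AE \<omega> in M. arctan_ennreal (g \<omega>) \<le> arctan_ennreal (f \<omega>))"
    proof
      assume "AE \<omega> in M. arctan_ennreal (g \<omega>) \<le> arctan_ennreal (f \<omega>)"
      then have "AE \<omega> in M. \<omega> \<notin> {\<omega>\<in>space M. f \<omega> < g \<omega>}"
        by eventually_elim (auto simp: strict_mono_less_eq[OF strict_mono_arctan_ennreal] dest: leD)
      with not_null show False
        by (simp add: AE_iff_null_sets)
    qed
  qed simp_all
  with integral_le show False
    by simp
qed

lemma exists_maximal_stopping_time_below:
  fixes \<tau> :: "'a \<Rightarrow> ennreal"
  obtains \<rho> where "stopping_time_on M F \<rho>" "\<forall>\<omega>\<in>space M. \<rho> \<omega> \<le> \<tau> \<omega>"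
    "\<forall>\<rho>'. stopping_time_on M F \<rho>' \<and> (\<forall>\<omega>\<in>space M. \<rho> \<omega> \<le> \<rho>' \<omega> \<and> \<rho>' \<omega> \<le> \<tau> \<omega>) \<longrightarrow>
      {\<omega>\<in>space M. \<rho> \<omega> < \<rho>' \<omega>} \<in> null_sets M"
proof -
  define S where "S = {\<rho>. stopping_time_on M F \<rho> \<and> (\<forall>\<omega>\<in>space M. \<rho> \<omega> \<le> \<tau> \<omega>)}"
  define \<Phi> where "\<Phi> \<rho> = (\<integral>\<^sup>+\<omega>. arctan_ennreal (\<rho> \<omega>) \<partial>M)" for \<rho> :: "'a \<Rightarrow> ennreal"
  have "(\<lambda>_. 0) \<in> S"
    using stopping_time_const_0 by (simp add: S_def)
  then obtain f :: "nat \<Rightarrow> ennreal" where f: "range f \<subseteq> \<Phi> ` S" "Sup (\<Phi> ` S) = Sup (range f)"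
    using ennreal_SUP_countable_SUP[of S \<Phi>] by blast
  then have "\<forall>k. \<exists>\<rho>\<in>S. f k = \<Phi> \<rho>"
    by blast
  then obtain \<rho>s where \<rho>s: "\<And>k. \<rho>s k \<in> S" "\<And>k. f k = \<Phi> (\<rho>s k)"
    by metis
  define \<rho> where "\<rho> \<omega> = (SUP k. \<rho>s k \<omega>)" for \<omega>
  have \<rho>_stopping: "stopping_time_on M F \<rho>"
    unfolding \<rho>_def using \<rho>s(1) by (intro stopping_time_SUP) (simp add: S_def)
  have \<rho>_le: "\<rho> \<omega> \<le> \<tau> \<omega>" if "\<omega> \<in> space M" for \<omega>
    unfolding \<rho>_def using \<rho>s(1) that by (intro SUP_least) (simp add: S_def)
  have "\<Phi> (\<rho>s k) \<le> \<Phi> \<rho>" for k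
    unfolding \<Phi>_def \<rho>_def by (rule nn_integral_arctan_ennreal_mono) (rule SUP_upper, simp)
  then have Sup_le: "Sup (\<Phi> ` S) \<le> \<Phi> \<rho>"
    unfolding f(2) by (intro SUP_least) (simp add: \<rho>s(2))
  show thesis
  proof (rule that[OF \<rho>_stopping]; intro allI impI ballI)
    show "\<rho> \<omega> \<le> \<tau> \<omega>" if "\<omega> \<in> space M" for \<omega>
      using that by (rule \<rho>_le)
    fix \<rho>'
    assume "stopping_time_on M F \<rho>' \<and> (\<forall>\<omega>\<in>space M. \<rho> \<omega> \<le> \<rho>' \<omega> \<and> \<rho>' \<omega> \<le> \<tau> \<omega>)"
    then have \<rho>': "stopping_time_on M F \<rho>'" "\<And>\<omega>. \<omega> \<in> space M \<Longrightarrow> \<rho> \<omega> \<le> \<rho>' \<omega> \<and> \<rho>' \<omega> \<le> \<tau> \<omega>"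
      by auto
    then have "\<rho>' \<in> S"
      by (simp add: S_def)
    then have "\<Phi> \<rho>' \<le> Sup (\<Phi> ` S)"
      by (rule SUP_upper)
    also note Sup_le
    finally have "\<Phi> \<rho>' \<le> \<Phi> \<rho>" .
    then show "{\<omega>\<in>space M. \<rho> \<omega> < \<rho>' \<omega>} \<in> null_sets M"
      using \<rho>' stopping_time_measurable[OF \<rho>_stopping] stopping_time_measurable[OF \<rho>'(1)]
      by (intro null_sets_less_if_nn_integral_arctan_le) (auto simp: \<Phi>_def)
  qed
qed

end

section \<open>Hitting times of right-continuous processes\<close>

lemma adapted_le_in_F:
  assumes "adapted M F Y" "0 \<le> t"
  shows "{\<omega>\<in>space M. Y t \<omega> \<le> c} \<in> F t"
proof -
  have "\<forall>B\<in>sets borel. {\<omega>\<in>space M. Y t \<omega> \<in> B} \<in> F t"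
    using assms by (simp add: adapted_def)
  from bspec[OF this, of "{..c}"] show ?thesis
    by simp
qed

lemma adapted_greater_in_F:
  assumes "adapted M F Y" "0 \<le> t"
  shows "{\<omega>\<in>space M. c < Y t \<omega>} \<in> F t"
proof -
  have "\<forall>B\<in>sets borel. {\<omega>\<in>space M. Y t \<omega> \<in> B} \<in> F t"
    using assms by (simp add: adapted_def)
  from bspec[OF this, of "{c<..}"] show ?thesis
    by simp
qed

lemma hitting_time_le: "0 \<le> t \<Longrightarrow> 0 \<le> Y t \<omega> \<Longrightarrow> hitting_time Y \<omega> \<le> ennreal t"
  unfolding hitting_time_def by (rule Inf_lower) auto

lemma less_hitting_time_imp_neg:
  assumes "0 \<le> t" "ennreal t < hitting_time Y \<omega>"
  shows "Y t \<omega> < 0"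
proof (rule ccontr)
  assume "\<not> Y t \<omega> < 0"
  then have "hitting_time Y \<omega> \<le> ennreal t"
    using assms(1) by (intro hitting_time_le) auto
  with assms(2) show False
    using leD by blast
qed

lemma hitting_time_attained:
  assumes right_cont: "\<And>t. 0 \<le> t \<Longrightarrow> ((\<lambda>s. Y s \<omega>) \<longlongrightarrow> Y t \<omega>) (at_right t)"
    and finite: "hitting_time Y \<omega> < \<infinity>"
  shows "0 \<le> Y (enn2real (hitting_time Y \<omega>)) \<omega>"
proof -
  define r where "r = enn2real (hitting_time Y \<omega>)"
  have r: "hitting_time Y \<omega> = ennreal r" "0 \<le> r"
    using finite by (simp_all add: r_def)
  have "0 \<le> Y r \<omega>"
  proof (rule ccontr)
    assume neg_r: "\<not> 0 \<le> Y r \<omega>"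
    then have "\<forall>\<^sub>F s in at_right r. Y s \<omega> < 0"
      using order_tendstoD(2)[OF right_cont[OF r(2)]] by simp
    then obtain c where "r < c" and neg: "\<And>s. r < s \<Longrightarrow> s < c \<Longrightarrow> Y s \<omega> < 0"
      by (auto simp: eventually_at_right_field)
    have "ennreal c \<le> hitting_time Y \<omega>"
      unfolding hitting_time_def
    proof (rule Inf_greatest)
      fix x
      assume "x \<in> ennreal ` {t. 0 \<le> t \<and> 0 \<le> Y t \<omega>}"
      then obtain v where v: "x = ennreal v" "0 \<le> v" "0 \<le> Y v \<omega>"
        by auto
      have "r \<le> v"
        using hitting_time_le[of v Y \<omega>, OF v(2,3)] r v(2) by simp
      with neg_r neg v(3) have "c \<le> v"
        by (metis le_less not_le)
      then show "ennreal c \<le> x"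
        using v(1) by (simp add: ennreal_leI)
    qed
    with r \<open>r < c\<close> show False
      by simp
  qed
  then show ?thesis
    by (simp add: r_def)
qed

definition hitting_time_after :: "(real \<Rightarrow> 'a \<Rightarrow> real) \<Rightarrow> real \<Rightarrow> ('a \<Rightarrow> ennreal) \<Rightarrow> 'a \<Rightarrow> ennreal" where
  "hitting_time_after Y c \<rho> \<omega> = Inf (ennreal ` {t. 0 \<le> t \<and> \<rho> \<omega> \<le> ennreal t \<and> c < Y t \<omega>})"

lemma hitting_time_after_ge: "\<rho> \<omega> \<le> hitting_time_after Y c \<rho> \<omega>"
  unfolding hitting_time_after_def by (rule Inf_greatest) auto

lemma hitting_time_after_le_hitting_time:
  assumes right_cont: "\<And>t. 0 \<le> t \<Longrightarrow> ((\<lambda>s. Y s \<omega>) \<longlongrightarrow> Y t \<omega>) (at_right t)"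
    and "c < 0" "\<rho> \<omega> \<le> hitting_time Y \<omega>"
  shows "hitting_time_after Y c \<rho> \<omega> \<le> hitting_time Y \<omega>"
proof (cases "hitting_time Y \<omega> = \<infinity>")
  case False
  then have finite: "hitting_time Y \<omega> < \<infinity>"
    by (simp add: less_top)
  define r where "r = enn2real (hitting_time Y \<omega>)"
  have r: "hitting_time Y \<omega> = ennreal r" "0 \<le> r"
    using finite by (simp_all add: r_def)
  have "c < Y r \<omega>"
    using hitting_time_attained[OF right_cont finite] \<open>c < 0\<close> by (simp add: r_def)
  then have "hitting_time_after Y c \<rho> \<omega> \<le> ennreal r"
    unfolding hitting_time_after_def using r assms(3) by (intro Inf_lower imageI) simp
  then show ?thesis
    using r by simp
qed simp

lemma less_hitting_time_after:
  assumes right_cont: "\<And>t. 0 \<le> t \<Longrightarrow> ((\<lambda>s. Y s \<omega>) \<longlongrightarrow> Y t \<omega>) (at_right t)"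
    and r: "\<rho> \<omega> = ennreal r" "0 \<le> r" and below: "Y r \<omega> < c"
  shows "\<rho> \<omega> < hitting_time_after Y c \<rho> \<omega>"
proof -
  have "\<forall>\<^sub>F s in at_right r. Y s \<omega> < c"
    using order_tendstoD(2)[OF right_cont[OF r(2)] below] .
  then obtain d where "r < d" and below': "\<And>s. r < s \<Longrightarrow> s < d \<Longrightarrow> Y s \<omega> < c"
    by (auto simp: eventually_at_right_field)
  have "ennreal d \<le> hitting_time_after Y c \<rho> \<omega>"
    unfolding hitting_time_after_def
  proof (rule Inf_greatest)
    fix x
    assume "x \<in> ennreal ` {t. 0 \<le> t \<and> \<rho> \<omega> \<le> ennreal t \<and> c < Y t \<omega>}"
    then obtain v where v: "x = ennreal v" "0 \<le> v" "r \<le> v" "c < Y v \<omega>"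
      using r by auto
    with below below' have "d \<le> v"
      by (metis le_less not_le not_less_iff_gr_or_eq)
    then show "ennreal d \<le> x"
      using v(1) by (simp add: ennreal_leI)
  qed
  moreover have "\<rho> \<omega> < ennreal d"
    using r \<open>r < d\<close> by (simp add: ennreal_less_iff)
  ultimately show ?thesis
    by (simp add: less_le_trans)
qed

lemma hitting_time_after_less_iff:
  assumes right_cont: "\<And>t. 0 \<le> t \<Longrightarrow> ((\<lambda>s. Y s \<omega>) \<longlongrightarrow> Y t \<omega>) (at_right t)"
  shows "hitting_time_after Y c \<rho> \<omega> < ennreal u \<longleftrightarrow>
    (\<exists>q\<in>\<rat>. 0 \<le> q \<and> q < u \<and> \<rho> \<omega> \<le> ennreal q \<and> c < Y q \<omega>)"
proof
  assume "hitting_time_after Y c \<rho> \<omega> < ennreal u"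
  then obtain v where v: "0 \<le> v" "\<rho> \<omega> \<le> ennreal v" "c < Y v \<omega>" "ennreal v < ennreal u"
    unfolding hitting_time_after_def Inf_less_iff by auto
  from order_tendstoD(1)[OF right_cont[OF v(1)] v(3)]
  obtain d where "v < d" and above: "\<And>s. v < s \<Longrightarrow> s < d \<Longrightarrow> c < Y s \<omega>"
    by (auto simp: eventually_at_right_field)
  have "v < u"
    using v(1,4) by (simp add: ennreal_less_iff)
  with \<open>v < d\<close> obtain q where q: "q \<in> \<rat>" "v < q" "q < min d u"
    using Rats_dense_in_real[of v "min d u"] by auto
  have "\<rho> \<omega> \<le> ennreal q"
    using v(2) ennreal_leI[of v q] q(2) by (simp add: order_trans)
  with q v(1) above[of q] show "\<exists>q\<in>\<rat>. 0 \<le> q \<and> q < u \<and> \<rho> \<omega> \<le> ennreal q \<and> c < Y q \<omega>"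
    by (intro bexI[of _ q]) auto
next
  assume "\<exists>q\<in>\<rat>. 0 \<le> q \<and> q < u \<and> \<rho> \<omega> \<le> ennreal q \<and> c < Y q \<omega>"
  then obtain q where q: "0 \<le> q" "q < u" "\<rho> \<omega> \<le> ennreal q" "c < Y q \<omega>"
    by blast
  then have "hitting_time_after Y c \<rho> \<omega> \<le> ennreal q"
    unfolding hitting_time_after_def by (intro Inf_lower imageI) simp
  also have "ennreal q < ennreal u"
    using q(1,2) by (simp add: ennreal_less_iff)
  finally show "hitting_time_after Y c \<rho> \<omega> < ennreal u" .
qed

context filtered_prob_space
begin

lemma stopping_time_hitting_time_after:
  assumes adapted: "adapted M F Y"
    and right_cont: "\<And>\<omega> t. \<omega> \<in> space M \<Longrightarrow> 0 \<le> t \<Longrightarrow> ((\<lambda>s. Y s \<omega>) \<longlongrightarrow> Y t \<omega>) (at_right t)"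
    and \<rho>: "stopping_time_on M F \<rho>"
  shows "stopping_time_on M F (hitting_time_after Y c \<rho>)"
proof (rule stopping_time_onI_less)
  fix u :: real
  assume "0 < u"
  interpret sigma_algebra "space M" "F u"
    using sigma_algebra_F \<open>0 < u\<close> by simp
  let ?Q = "{q\<in>\<rat>. 0 \<le> q \<and> q < u}"
  have "hitting_time_after Y c \<rho> \<omega> < ennreal u \<longleftrightarrow>
      (\<exists>q\<in>\<rat>. 0 \<le> q \<and> q < u \<and> \<rho> \<omega> \<le> ennreal q \<and> c < Y q \<omega>)" if "\<omega> \<in> space M" for \<omega>
    using right_cont[OF that] by (rule hitting_time_after_less_iff)
  then have "{\<omega>\<in>space M. hitting_time_after Y c \<rho> \<omega> < ennreal u} =
      (\<Union>q\<in>?Q. {\<omega>\<in>space M. \<rho> \<omega> \<le> ennreal q} \<inter> {\<omega>\<in>space M. c < Y q \<omega>})"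
    by auto
  also have "\<dots> \<in> F u"
  proof (intro countable_UN'' countable_Collect countable_rat)
    fix q
    assume "q \<in> ?Q"
    then show "{\<omega>\<in>space M. \<rho> \<omega> \<le> ennreal q} \<inter> {\<omega>\<in>space M. c < Y q \<omega>} \<in> F u"
      using stopping_time_le_in_F[OF \<rho>, of q u] adapted_greater_in_F[OF adapted, of q c] F_mono[of q u]
      by (intro Int) auto
  qed
  finally show "{\<omega>\<in>space M. hitting_time_after Y c \<rho> \<omega> < ennreal u} \<in> F u" .
qed

lemma stopping_time_hitting_time:
  assumes adapted: "adapted M F Y"
    and right_cont: "\<And>\<omega> t. \<omega> \<in> space M \<Longrightarrow> 0 \<le> t \<Longrightarrow> ((\<lambda>s. Y s \<omega>) \<longlongrightarrow> Y t \<omega>) (at_right t)"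
  shows "stopping_time_on M F (hitting_time Y)"
proof -
  obtain \<rho> where \<rho>: "stopping_time_on M F \<rho>" "\<forall>\<omega>\<in>space M. \<rho> \<omega> \<le> hitting_time Y \<omega>"
    and maximal: "\<forall>\<rho>'. stopping_time_on M F \<rho>' \<and>
      (\<forall>\<omega>\<in>space M. \<rho> \<omega> \<le> \<rho>' \<omega> \<and> \<rho>' \<omega> \<le> hitting_time Y \<omega>) \<longrightarrow>
      {\<omega>\<in>space M. \<rho> \<omega> < \<rho>' \<omega>} \<in> null_sets M"
    by (rule exists_maximal_stopping_time_below)
  define \<rho>' where "\<rho>' n = hitting_time_after Y (- inverse (Suc n)) \<rho>" for n :: nat
  define N where "N = (\<Union>n. {\<omega>\<in>space M. \<rho> \<omega> < \<rho>' n \<omega>})"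
  have "{\<omega>\<in>space M. \<rho> \<omega> < \<rho>' n \<omega>} \<in> null_sets M" for n
    unfolding \<rho>'_def
  proof (intro maximal[rule_format] conjI ballI)
    show "stopping_time_on M F (hitting_time_after Y (- inverse (Suc n)) \<rho>)"
      using adapted right_cont \<rho>(1) by (rule stopping_time_hitting_time_after)
    fix \<omega>
    assume "\<omega> \<in> space M"
    then show "hitting_time_after Y (- inverse (Suc n)) \<rho> \<omega> \<le> hitting_time Y \<omega>"
      using right_cont \<rho>(2) by (intro hitting_time_after_le_hitting_time) auto
  qed (rule hitting_time_after_ge)
  then have "N \<in> null_sets M"
    unfolding N_def by (rule null_sets_UN)
  moreover have "hitting_time Y \<omega> = \<rho> \<omega>" if \<omega>: "\<omega> \<in> space M - N" for \<omega>
  proof (rule ccontr)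
    assume "hitting_time Y \<omega> \<noteq> \<rho> \<omega>"
    with \<rho>(2) \<omega> have less: "\<rho> \<omega> < hitting_time Y \<omega>"
      by (simp add: order.not_eq_order_implies_strict)
    then obtain r where r: "\<rho> \<omega> = ennreal r" "0 \<le> r"
      by (cases "\<rho> \<omega>") auto
    with less have "Y r \<omega> < 0"
      by (intro less_hitting_time_imp_neg) simp_all
    then obtain n where "inverse (real (Suc n)) < - Y r \<omega>"
      using reals_Archimedean[of "- Y r \<omega>"] by auto
    then have "\<rho> \<omega> < \<rho>' n \<omega>"
      unfolding \<rho>'_def using \<omega> right_cont r by (intro less_hitting_time_after) auto
    with \<omega> show False
      by (auto simp: N_def)
  qed
  ultimately show ?thesis
    by (rule stopping_time_eq_outside_null[OF \<rho>(1)])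
qed

end

section \<open>Reaching the level by a jump\<close>

lemma tendsto_at_left_neg_iff_rational_bound:
  fixes f :: "real \<Rightarrow> real"
  assumes lim: "(f \<longlongrightarrow> l) (at_left r)" and "c < r"
  shows "l < 0 \<longleftrightarrow>
    (\<exists>\<delta>\<in>\<rat>. 0 < \<delta> \<and> (\<exists>a\<in>\<rat>. c \<le> a \<and> a < r \<and> (\<forall>q\<in>\<rat>. a \<le> q \<and> q < r \<longrightarrow> f q \<le> - \<delta>)))"
proof
  assume "l < 0"
  then obtain \<delta> where \<delta>: "\<delta> \<in> \<rat>" "0 < \<delta>" "\<delta> < - l / 2"
    using Rats_dense_in_real[of 0 "- l / 2"] by auto
  from \<open>l < 0\<close> have "l < l / 2"
    by simp
  from order_tendstoD(2)[OF lim this] obtain b where "b < r" and below: "\<And>s. b < s \<Longrightarrow> s < r \<Longrightarrow> f s < l / 2"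
    by (auto simp: eventually_at_left_field)
  obtain a where a: "a \<in> \<rat>" "max b c < a" "a < r"
    using Rats_dense_in_real[of "max b c" r] \<open>b < r\<close> \<open>c < r\<close> by auto
  have "f q \<le> - \<delta>" if "a \<le> q" "q < r" for q
    using below[of q] that a(2) \<delta>(3) by simp
  with \<delta> a show "\<exists>\<delta>\<in>\<rat>. 0 < \<delta> \<and> (\<exists>a\<in>\<rat>. c \<le> a \<and> a < r \<and> (\<forall>q\<in>\<rat>. a \<le> q \<and> q < r \<longrightarrow> f q \<le> - \<delta>))"
    by (intro bexI[of _ \<delta>] conjI bexI[of _ a]) auto
next
  assume "\<exists>\<delta>\<in>\<rat>. 0 < \<delta> \<and> (\<exists>a\<in>\<rat>. c \<le> a \<and> a < r \<and> (\<forall>q\<in>\<rat>. a \<le> q \<and> q < r \<longrightarrow> f q \<le> - \<delta>))"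
  then obtain \<delta> a where "0 < \<delta>" "a < r" and bound: "\<And>q. q \<in> \<rat> \<Longrightarrow> a \<le> q \<Longrightarrow> q < r \<Longrightarrow> f q \<le> - \<delta>"
    by auto
  have "l \<le> - \<delta>"
  proof (rule ccontr)
    assume "\<not> l \<le> - \<delta>"
    then have "- \<delta> < l"
      by simp
    from order_tendstoD(1)[OF lim this] obtain b where "b < r" and above: "\<And>s. b < s \<Longrightarrow> s < r \<Longrightarrow> - \<delta> < f s"
      by (auto simp: eventually_at_left_field)
    obtain q where "q \<in> \<rat>" "max a b < q" "q < r"
      using Rats_dense_in_real[of "max a b" r] \<open>a < r\<close> \<open>b < r\<close> by auto
    with bound[of q] above[of q] show False
      by simp
  qed
  with \<open>0 < \<delta>\<close> show "l < 0"
    by simp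
qed

lemma cadlag_paths_right_cont:
  "cadlag_paths M Y \<Longrightarrow> \<omega> \<in> space M \<Longrightarrow> 0 \<le> t \<Longrightarrow> ((\<lambda>s. Y s \<omega>) \<longlongrightarrow> Y t \<omega>) (at_right t)"
  by (simp add: cadlag_paths_def)

lemma cadlag_paths_left_lim:
  assumes "cadlag_paths M Y" "\<omega> \<in> space M" "0 < t"
  shows "((\<lambda>s. Y s \<omega>) \<longlongrightarrow> left_lim Y t \<omega>) (at_left t)"
proof -
  obtain l where "((\<lambda>s. Y s \<omega>) \<longlongrightarrow> l) (at_left t)"
    using assms unfolding cadlag_paths_def by blast
  with \<open>0 < t\<close> show ?thesis
    by (simp add: left_lim_def tendsto_Lim)
qed

lemma left_lim_neg_iff_rational_bound:
  assumes cadlag: "cadlag_paths M Y" and \<omega>: "\<omega> \<in> space M" and "0 \<le> r" "0 \<le> Y r \<omega>"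
  shows "left_lim Y r \<omega> < 0 \<longleftrightarrow>
    (\<exists>\<delta>\<in>\<rat>. 0 < \<delta> \<and> (\<exists>a\<in>\<rat>. 0 \<le> a \<and> a < r \<and> (\<forall>q\<in>\<rat>. a \<le> q \<and> q < r \<longrightarrow> Y q \<omega> \<le> - \<delta>)))"
proof (cases "r = 0")
  case True
  with \<open>0 \<le> Y r \<omega>\<close> show ?thesis
    by (auto simp: left_lim_def)
next
  case False
  with \<open>0 \<le> r\<close> have "0 < r"
    by simp
  then show ?thesis
    by (rule tendsto_at_left_neg_iff_rational_bound[OF cadlag_paths_left_lim[OF cadlag \<omega> \<open>0 < r\<close>]])
qed

definition jump_hitting_time :: "(real \<Rightarrow> 'a \<Rightarrow> real) \<Rightarrow> 'a \<Rightarrow> ennreal" where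
  "jump_hitting_time Y \<omega> =
    (if hitting_time Y \<omega> < \<infinity> \<and> left_lim Y (enn2real (hitting_time Y \<omega>)) \<omega> < 0
     then hitting_time Y \<omega> else \<infinity>)"

lemma hitting_time_le_jump_hitting_time: "hitting_time Y \<omega> \<le> jump_hitting_time Y \<omega>"
  by (simp add: jump_hitting_time_def)

lemma jump_hitting_time_le_iff:
  assumes cadlag: "cadlag_paths M Y" and \<omega>: "\<omega> \<in> space M" and "0 \<le> t"
  shows "jump_hitting_time Y \<omega> \<le> ennreal t \<longleftrightarrow>
    (\<exists>\<delta>\<in>\<rat>. 0 < \<delta> \<and> (\<exists>a\<in>\<rat>. 0 \<le> a \<and> a < t \<and>
      ennreal a < hitting_time Y \<omega> \<and> hitting_time Y \<omega> \<le> ennreal t \<and>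
      (\<forall>q\<in>\<rat>. a \<le> q \<and> q < t \<longrightarrow> hitting_time Y \<omega> \<le> ennreal q \<or> Y q \<omega> \<le> - \<delta>)))"
    (is "?lhs \<longleftrightarrow> ?rhs")
proof (cases "hitting_time Y \<omega> \<le> ennreal t")
  case False
  then show ?thesis
    using order_trans[OF hitting_time_le_jump_hitting_time[of Y \<omega>], of "ennreal t"] by auto
next
  case True
  then have finite: "hitting_time Y \<omega> < \<infinity>"
    by (simp add: le_less_trans)
  define r where "r = enn2real (hitting_time Y \<omega>)"
  have r: "hitting_time Y \<omega> = ennreal r" "0 \<le> r"
    using finite by (simp_all add: r_def)
  with True \<open>0 \<le> t\<close> have "r \<le> t"
    by simp
  have hit: "0 \<le> Y r \<omega>"
    using hitting_time_attained[of Y \<omega>, OF cadlag_paths_right_cont[OF cadlag \<omega>] finite] by (simp add: r_def)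
  have "?lhs \<longleftrightarrow> left_lim Y r \<omega> < 0"
    using finite True by (auto simp: jump_hitting_time_def r_def top_unique)
  also have "\<dots> \<longleftrightarrow> (\<exists>\<delta>\<in>\<rat>. 0 < \<delta> \<and> (\<exists>a\<in>\<rat>. 0 \<le> a \<and> a < r \<and> (\<forall>q\<in>\<rat>. a \<le> q \<and> q < r \<longrightarrow> Y q \<omega> \<le> - \<delta>)))"
    using cadlag \<omega> r(2) hit by (rule left_lim_neg_iff_rational_bound)
  also have "\<dots> \<longleftrightarrow> ?rhs"
  proof -
    have "(a < t \<and> ennreal a < hitting_time Y \<omega> \<and> hitting_time Y \<omega> \<le> ennreal t \<and>
        (\<forall>q\<in>\<rat>. a \<le> q \<and> q < t \<longrightarrow> hitting_time Y \<omega> \<le> ennreal q \<or> Y q \<omega> \<le> - \<delta>)) \<longleftrightarrow>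
      (a < r \<and> (\<forall>q\<in>\<rat>. a \<le> q \<and> q < r \<longrightarrow> Y q \<omega> \<le> - \<delta>))" if "0 \<le> a" for a \<delta>
      using that r \<open>r \<le> t\<close> by (auto simp: ennreal_less_iff not_le[symmetric])
    then show ?thesis
      by (simp only: cong: conj_cong)
  qed
  finally show ?thesis .
qed

context filtered_prob_space
begin

lemma stopping_time_jump_hitting_time:
  assumes cadlag: "cadlag_paths M Y" and adapted: "adapted M F Y"
  shows "stopping_time_on M F (jump_hitting_time Y)"
  unfolding stopping_time_on_def
proof (intro allI impI)
  fix t :: real
  assume t: "0 \<le> t"
  interpret sigma_algebra "space M" "F t"
    using sigma_algebra_F[OF t] .
  have \<tau>: "stopping_time_on M F (hitting_time Y)"
    using adapted cadlag_paths_right_cont[OF cadlag] by (rule stopping_time_hitting_time)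
  let ?H = "\<lambda>s. {\<omega>\<in>space M. hitting_time Y \<omega> \<le> ennreal s}"
  let ?A = "\<lambda>\<delta> a. (?H t - ?H a) \<inter> (\<Inter>q\<in>{q\<in>\<rat>. a \<le> q \<and> q < t}. ?H q \<union> {\<omega>\<in>space M. Y q \<omega> \<le> - \<delta>})"
  have "{\<omega>\<in>space M. jump_hitting_time Y \<omega> \<le> ennreal t} =
      (\<Union>\<delta>\<in>{\<delta>\<in>\<rat>. 0 < \<delta>}. \<Union>a\<in>{a\<in>\<rat>. 0 \<le> a \<and> a < t}. ?A \<delta> a)"
    using jump_hitting_time_le_iff[OF cadlag _ t] by (auto simp: not_le) blast+
  also have "\<dots> \<in> F t"
  proof (intro countable_UN'' countable_Collect countable_rat)
    fix \<delta> a
    assume a: "a \<in> {a\<in>\<rat>. 0 \<le> a \<and> a < t}"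
    have "?H q \<union> {\<omega>\<in>space M. Y q \<omega> \<le> - \<delta>} \<in> F t" if "q \<in> {q\<in>\<rat>. a \<le> q \<and> q < t}" for q
      using that a stopping_time_le_in_F[OF \<tau>, of q t] adapted_le_in_F[OF adapted, of q "- \<delta>"] F_mono[of q t]
      by (intro Un) auto
    moreover have "{q\<in>\<rat>. a \<le> q \<and> q < t} \<noteq> {}"
      using a by auto
    ultimately have "(\<Inter>q\<in>{q\<in>\<rat>. a \<le> q \<and> q < t}. ?H q \<union> {\<omega>\<in>space M. Y q \<omega> \<le> - \<delta>}) \<in> F t"
      by (intro countable_INT' countable_Collect countable_rat) auto
    then show "?A \<delta> a \<in> F t"
      using a stopping_time_le_in_F[OF \<tau>, of t t] stopping_time_le_in_F[OF \<tau>, of a t]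
      by (intro Int Diff) auto
  qed
  finally show "{\<omega>\<in>space M. jump_hitting_time Y \<omega> \<le> ennreal t} \<in> F t" .
qed

lemma totally_inaccessible_jump_hitting_time:
  assumes cadlag: "cadlag_paths M Y" and adapted: "adapted M F Y"
    and no_predictable_crossing: "\<And>\<sigma>. predictable_time M F \<sigma> \<Longrightarrow>
      {\<omega>\<in>space M. \<sigma> \<omega> < \<infinity> \<and> left_lim Y (enn2real (\<sigma> \<omega>)) \<omega> < 0 \<and> 0 \<le> Y (enn2real (\<sigma> \<omega>)) \<omega>}
        \<in> null_sets M"
  shows "totally_inaccessible M F (jump_hitting_time Y)"
  unfolding totally_inaccessible_def
proof (intro conjI allI impI)
  show "stopping_time_on M F (jump_hitting_time Y)"
    using cadlag adapted by (rule stopping_time_jump_hitting_time)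
  fix \<sigma>
  assume "predictable_time M F \<sigma>"
  have "left_lim Y (enn2real (\<sigma> \<omega>)) \<omega> < 0 \<and> 0 \<le> Y (enn2real (\<sigma> \<omega>)) \<omega>"
    if "\<omega> \<in> space M" "jump_hitting_time Y \<omega> = \<sigma> \<omega>" "\<sigma> \<omega> < \<infinity>" for \<omega>
    using that hitting_time_attained[of Y \<omega>, OF cadlag_paths_right_cont[OF cadlag that(1)]]
    by (auto simp: jump_hitting_time_def split: if_splits)
  then have "{\<omega>\<in>space M. jump_hitting_time Y \<omega> = \<sigma> \<omega> \<and> \<sigma> \<omega> < \<infinity>} \<subseteq>
      {\<omega>\<in>space M. \<sigma> \<omega> < \<infinity> \<and> left_lim Y (enn2real (\<sigma> \<omega>)) \<omega> < 0 \<and> 0 \<le> Y (enn2real (\<sigma> \<omega>)) \<omega>}"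
    by auto
  with no_predictable_crossing[OF \<open>predictable_time M F \<sigma>\<close>]
  show "{\<omega>\<in>space M. jump_hitting_time Y \<omega> = \<sigma> \<omega> \<and> \<sigma> \<omega> < \<infinity>} \<in> null_sets M"
    by (rule null_sets_subset_complete)
qed

end

section \<open>Crossing a continuous boundary\<close>

lemma continuous_on_nonneg_tendsto_at_right:
  fixes b :: "real \<Rightarrow> 'b::topological_space"
  assumes "continuous_on {0..} b" "0 \<le> t"
  shows "(b \<longlongrightarrow> b t) (at_right t)"
proof -
  have "(b \<longlongrightarrow> b t) (at t within {0..})"
    using assms by (simp add: continuous_on_def)
  then show ?thesis
    by (rule tendsto_within_subset) (use \<open>0 \<le> t\<close> in auto)
qed

lemma continuous_on_nonneg_tendsto_at_left:
  fixes b :: "real \<Rightarrow> 'b::topological_space"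
  assumes "continuous_on {0..} b" "0 < t"
  shows "(b \<longlongrightarrow> b t) (at_left t)"
proof -
  have "continuous_on {0<..} b"
    using assms(1) by (rule continuous_on_subset) auto
  then have "isCont b t"
    using assms(2) by (simp add: continuous_on_eq_continuous_at)
  then show ?thesis
    by (simp add: isCont_def filterlim_at_split)
qed

lemma cadlag_paths_diff_continuous:
  assumes "cadlag_paths M X" "continuous_on {0..} b"
  shows "cadlag_paths M (\<lambda>t \<omega>. X t \<omega> - b t)"
  unfolding cadlag_paths_def
proof (intro ballI conjI allI impI)
  fix \<omega> t
  assume "\<omega> \<in> space M"
  show "((\<lambda>s. X s \<omega> - b s) \<longlongrightarrow> X t \<omega> - b t) (at_right t)" if "0 \<le> t"
    using assms \<open>\<omega> \<in> space M\<close> that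
    by (intro tendsto_diff cadlag_paths_right_cont continuous_on_nonneg_tendsto_at_right)
  show "\<exists>l. ((\<lambda>s. X s \<omega> - b s) \<longlongrightarrow> l) (at_left t)" if "0 < t"
    using assms \<open>\<omega> \<in> space M\<close> that
    by (intro exI[of _ "left_lim X t \<omega> - b t"] tendsto_diff cadlag_paths_left_lim
        continuous_on_nonneg_tendsto_at_left)
qed

lemma left_lim_diff_continuous:
  assumes "cadlag_paths M X" "continuous_on {0..} b" "\<omega> \<in> space M" "0 < t"
  shows "left_lim (\<lambda>t \<omega>. X t \<omega> - b t) t \<omega> = left_lim X t \<omega> - b t"
proof -
  have "((\<lambda>s. X s \<omega> - b s) \<longlongrightarrow> left_lim X t \<omega> - b t) (at_left t)"
    using assms by (intro tendsto_diff cadlag_paths_left_lim continuous_on_nonneg_tendsto_at_left)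
  with \<open>0 < t\<close> show ?thesis
    by (simp add: left_lim_def tendsto_Lim)
qed

lemma adapted_diff_deterministic:
  fixes b :: "real \<Rightarrow> real"
  assumes "adapted M F X"
  shows "adapted M F (\<lambda>t \<omega>. X t \<omega> - b t)"
  unfolding adapted_def
proof (intro allI impI ballI)
  fix t :: real and B :: "real set"
  assume "0 \<le> t" "B \<in> sets borel"
  then have "(\<lambda>x. x - b t) -` B \<in> sets borel"
    by (intro measurable_sets_borel) simp_all
  with assms \<open>0 \<le> t\<close> have "{\<omega>\<in>space M. X t \<omega> \<in> (\<lambda>x. x - b t) -` B} \<in> F t"
    unfolding adapted_def by blast
  then show "{\<omega>\<in>space M. X t \<omega> - b t \<in> B} \<in> F t"
    by simp
qed

lemma left_lim_crossing_diff:
  assumes "cadlag_paths M X" "continuous_on {0..} b" "\<omega> \<in> space M" "0 \<le> t"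
    and "left_lim (\<lambda>t \<omega>. X t \<omega> - b t) t \<omega> < 0" "0 \<le> X t \<omega> - b t"
  shows "left_lim X t \<omega> < b t \<and> b t \<le> X t \<omega>"
proof (cases "t = 0")
  case True
  with assms(5,6) show ?thesis
    by (simp add: left_lim_def)
next
  case False
  with assms show ?thesis
    by (simp add: left_lim_diff_continuous)
qed

context filtered_prob_space
begin

lemma totally_inaccessible_jump_crossing_time:
  assumes cadlag: "cadlag_paths M X" and adapted: "adapted M F X" and b: "continuous_on {0..} b"
    and no_predictable_crossing: "\<And>\<sigma>. predictable_time M F \<sigma> \<Longrightarrow>
      {\<omega>\<in>space M. \<sigma> \<omega> < \<infinity> \<and> left_lim X (enn2real (\<sigma> \<omega>)) \<omega> < b (enn2real (\<sigma> \<omega>)) \<and>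
        b (enn2real (\<sigma> \<omega>)) \<le> X (enn2real (\<sigma> \<omega>)) \<omega>} \<in> null_sets M"
  shows "totally_inaccessible M F (jump_hitting_time (\<lambda>t \<omega>. X t \<omega> - b t))"
proof (rule totally_inaccessible_jump_hitting_time)
  show "cadlag_paths M (\<lambda>t \<omega>. X t \<omega> - b t)"
    using cadlag b by (rule cadlag_paths_diff_continuous)
  show "adapted M F (\<lambda>t \<omega>. X t \<omega> - b t)"
    using adapted by (rule adapted_diff_deterministic)
  fix \<sigma>
  assume "predictable_time M F \<sigma>"
  have "{\<omega>\<in>space M. \<sigma> \<omega> < \<infinity> \<and> left_lim (\<lambda>t \<omega>. X t \<omega> - b t) (enn2real (\<sigma> \<omega>)) \<omega> < 0 \<and>
      0 \<le> X (enn2real (\<sigma> \<omega>)) \<omega> - b (enn2real (\<sigma> \<omega>))} \<subseteq>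
    {\<omega>\<in>space M. \<sigma> \<omega> < \<infinity> \<and> left_lim X (enn2real (\<sigma> \<omega>)) \<omega> < b (enn2real (\<sigma> \<omega>)) \<and>
      b (enn2real (\<sigma> \<omega>)) \<le> X (enn2real (\<sigma> \<omega>)) \<omega>}"
    using left_lim_crossing_diff[OF cadlag b] by auto
  then show "{\<omega>\<in>space M. \<sigma> \<omega> < \<infinity> \<and> left_lim (\<lambda>t \<omega>. X t \<omega> - b t) (enn2real (\<sigma> \<omega>)) \<omega> < 0 \<and>
      0 \<le> X (enn2real (\<sigma> \<omega>)) \<omega> - b (enn2real (\<sigma> \<omega>))} \<in> null_sets M"
    by (rule null_sets_subset_complete[OF no_predictable_crossing[OF \<open>predictable_time M F \<sigma>\<close>]])
qed

end

theorem corollary2p18: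
  fixes M :: "'a measure" and F :: "real \<Rightarrow> 'a set set"
    and X :: "real \<Rightarrow> 'a \<Rightarrow> real" and b :: "real \<Rightarrow> real"
    and Y :: "real \<Rightarrow> 'a \<Rightarrow> real" and \<tau> \<tau>G :: "'a \<Rightarrow> ennreal"
  assumes "prob_space M"
    and "usual_conditions M F"
    and "cadlag_paths M X" and "adapted M F X"
    and "continuous_on {0..} b"
    and "\<forall>\<omega>\<in>space M. X 0 \<omega> < b 0"
    and Y_def: "Y = (\<lambda>t \<omega>. X t \<omega> - b t)"
    and tau_def: "\<tau> = hitting_time Y"
    and tauG_def: "\<tau>G = (\<lambda>\<omega>. if \<tau> \<omega> < \<infinity> \<and> left_lim Y (enn2real (\<tau> \<omega>)) \<omega> < 0
                              then \<tau> \<omega> else \<infinity>)"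
  shows "((\<forall>\<sigma>. predictable_time M F \<sigma> \<longrightarrow>
            {\<omega>\<in>space M. \<sigma> \<omega> < \<infinity> \<and>
               left_lim X (enn2real (\<sigma> \<omega>)) \<omega> < b (enn2real (\<sigma> \<omega>)) \<and>
               b (enn2real (\<sigma> \<omega>)) \<le> X (enn2real (\<sigma> \<omega>)) \<omega>} \<in> null_sets M)
          \<longrightarrow> totally_inaccessible M F \<tau>G)
       \<and> ((\<forall>\<sigma>. predictable_time M F \<sigma> \<longrightarrow>
            {\<omega>\<in>space M. \<sigma> \<omega> < \<infinity> \<and>
               X (enn2real (\<sigma> \<omega>)) \<omega> - left_lim X (enn2real (\<sigma> \<omega>)) \<omega> \<noteq> 0} \<in> null_sets M)
          \<longrightarrow> totally_inaccessible M F \<tau>G)"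
proof -
  interpret filtered_prob_space M F
    using assms(1,2) by (simp add: filtered_prob_space_def filtered_prob_space_axioms_def)
  have tauG: "\<tau>G = jump_hitting_time (\<lambda>t \<omega>. X t \<omega> - b t)"
    unfolding tauG_def tau_def Y_def jump_hitting_time_def ..
  have "{\<omega>\<in>space M. \<sigma> \<omega> < \<infinity> \<and> left_lim X (enn2real (\<sigma> \<omega>)) \<omega> < b (enn2real (\<sigma> \<omega>)) \<and>
      b (enn2real (\<sigma> \<omega>)) \<le> X (enn2real (\<sigma> \<omega>)) \<omega>} \<subseteq>
    {\<omega>\<in>space M. \<sigma> \<omega> < \<infinity> \<and> X (enn2real (\<sigma> \<omega>)) \<omega> - left_lim X (enn2real (\<sigma> \<omega>)) \<omega> \<noteq> 0}" for \<sigma>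
    by auto
  then show ?thesis
    unfolding tauG using totally_inaccessible_jump_crossing_time[OF assms(3-5)]
    by (meson null_sets_subset_complete)
qed

end
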